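(* Let $k=2$, $\lambda>0$ and $0<\theta<1$, and $F(x,y,\theta)=\frac{1+x+\theta y}{1+x+y}$. If either $\theta\ge1/3$, or $\theta<1/3$ and $\lambda\le\frac{9}{4(1-3\theta)}$, then the system $$z^-_1=\lambda F(z^-_1,z^+_2,\theta)^2,\ z^+_1=\lambda F(z^+_1,z^-_2,\theta)^2,\ z^-_2=\lambda F(z^-_2,z^+_1,\theta)^2,\ z^+_2=\lambda F(z^+_2,z^-_1,\theta)^2$$ has the unique solution $(x^*,x^*,x^*,x^* )$ in $(0,\infty)^4$, where $x^*$ is the unique positive solution of $x=\lambda\bigl(\frac{1+(1+\theta)x}{1+2x}\bigr)^2$. *)

theory Defs
  imports Complex_Main
begin

definition F :: "real \<Rightarrow> real \<Rightarrow> real \<Rightarrow> real" where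
  "F x y th = (1 + x + th * y) / (1 + x + y)"

end

theory Submission
  imports Defs
begin

text \<open>The four equations split into the two systems \<open>a = \<lambda> F(a,b)\<^sup>2, b = \<lambda> F(b,a)\<^sup>2\<close> for the
pairs \<open>(z\<^sup>-\<^sub>1, z\<^sup>+\<^sub>2)\<close> and \<open>(z\<^sup>+\<^sub>1, z\<^sup>-\<^sub>2)\<close>. In square roots \<open>u = \<surd>a, v = \<surd>b, r = \<surd>\<lambda>\<close> such a
system becomes polynomial; if \<open>u \<noteq> v\<close>, subtracting and adding the equations yields identities
in \<open>p = u + v\<close>, \<open>q = u v\<close> which together with \<open>p\<^sup>2 > 4q\<close> force \<open>\<theta> < 1/3\<close> and
\<open>4 (1 - 3\<theta>) \<lambda> > 9\<close>. Hence every solution is diagonal, and on the diagonal the equation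
\<open>x = \<lambda> F(x,x)\<^sup>2\<close> has exactly one positive root because its right-hand side is positive,
bounded and decreasing in \<open>x\<close>.\<close>

lemma fixed_point_exists_bounded:
  fixes g :: "real \<Rightarrow> real"
  assumes cont: "continuous_on {0..} g" and pos: "0 < g 0" and bound: "\<And>x. 0 \<le> x \<Longrightarrow> g x \<le> M"
  shows "\<exists>x>0. x = g x"
proof -
  have M: "0 \<le> M" using bound[of 0] pos by simp
  have "continuous_on {0..M} (\<lambda>x. x - g x)"
    using cont by (intro continuous_intros) (auto elim: continuous_on_subset)
  moreover have "0 - g 0 \<le> 0" "0 \<le> M - g M" using pos bound[OF M] by auto
  ultimately obtain x where "0 \<le> x" "x \<le> M" "x - g x = 0"
    using IVT'[of "\<lambda>x. x - g x" 0 0 M] M by auto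
  moreover have "x \<noteq> 0" using \<open>x - g x = 0\<close> pos by auto
  ultimately show ?thesis by (intro exI[of _ x]) auto
qed

lemma fixed_point_unique_antimono:
  fixes g :: "real \<Rightarrow> real"
  assumes antimono: "\<And>x y. 0 \<le> x \<Longrightarrow> x \<le> y \<Longrightarrow> g y \<le> g x"
    and "0 \<le> x" "0 \<le> y" "x = g x" "y = g y"
  shows "x = y"
  using antimono[of x y] antimono[of y x] assms(2-) by (cases "x \<le> y") auto

lemma F_diag: "F x x th = (1 + (1 + th) * x) / (1 + 2 * x)"
  unfolding F_def by (simp add: algebra_simps)

lemma F_diag_pos:
  assumes "0 \<le> x" "0 \<le> th"
  shows "0 < F x x th"
  unfolding F_diag using assms by (intro divide_pos_pos add_pos_nonneg) auto

lemma F_diag_le_one: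
  assumes "0 \<le> x" "th \<le> 1"
  shows "F x x th \<le> 1"
  unfolding F_diag using assms mult_right_mono[of th 1 x] by (simp add: field_simps)

lemma F_diag_antimono:
  assumes "0 \<le> x" "x \<le> y" "th \<le> 1"
  shows "F y y th \<le> F x x th"
proof -
  have "(1 + (1 + th) * x) * (1 + 2 * y) - (1 + (1 + th) * y) * (1 + 2 * x) = (1 - th) * (y - x)"
    by (simp add: algebra_simps)
  also have "\<dots> \<ge> 0" using assms by simp
  finally show ?thesis unfolding F_diag using assms by (simp add: divide_simps)
qed

lemma continuous_on_F_diag: "continuous_on {0..} (\<lambda>x. F x x th)"
  unfolding F_diag by (intro continuous_intros) auto

text \<open>\<open>eq1\<close> and \<open>eq2\<close> are the identities satisfied by \<open>p = u + v\<close>, \<open>q = u v\<close> for a solution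
\<open>u \<noteq> v\<close> of the square-root system in the next lemma.\<close>

lemma asymmetric_sum_product_bounds:
  fixes p q r th :: real
  assumes p: "0 < p" and th: "0 < th" "th < 1" and disc: "4 * q < p^2"
    and eq1: "(1 + th) * q - th * p^2 = 1" and eq2: "1 + p^2 - 2 * q = r * (1 - th) * p"
  shows "4 < (1 - 3 * th) * p^2" and "9 < 4 * (1 - 3 * th) * r^2"
proof -
  have "4 * (th * p^2 + 1) < (1 + th) * p^2"
    using mult_strict_left_mono[OF disc, of "1 + th"] th eq1 by (simp add: algebra_simps)
  then show c: "4 < (1 - 3 * th) * p^2" by (simp add: algebra_simps)
  have "(1 + th) * (r * (1 - th) * p) = (1 - th) * (p^2 - 1)"
    unfolding eq2[symmetric] using eq1 by (simp add: algebra_simps)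
  then have "(1 - th) * (r * (1 + th) * p) = (1 - th) * (p^2 - 1)" by (simp add: algebra_simps)
  then have rp: "r * (1 + th) * p = p^2 - 1" using th by simp
  have "0 < ((1 - 3 * th) * p^2 - 4) * (4 * p^2 - (1 - 3 * th))"
    using c th mult_right_mono[of "1 - 3 * th" 1 "p^2"] by (intro mult_pos_pos) auto
  \<comment> \<open>with \<open>c = 1 - 3\<theta>\<close> this is \<open>4c (p\<^sup>2 - 1)\<^sup>2 > (4 - c)\<^sup>2 p\<^sup>2 = 9 ((1 + \<theta>) p)\<^sup>2\<close>\<close>
  then have "9 * ((1 + th) * p)^2 < 4 * (1 - 3 * th) * (p^2 - 1)^2"
    by (simp add: algebra_simps power2_eq_square)
  also have "\<dots> = (4 * (1 - 3 * th) * r^2) * ((1 + th) * p)^2"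
    unfolding rp[symmetric] by (simp add: power_mult_distrib)
  finally show "9 < 4 * (1 - 3 * th) * r^2"
    using p th by (simp add: mult_less_cancel_right_pos)
qed

lemma sqrt_pair_system_symmetric:
  fixes u v r th :: real
  assumes u: "0 < u" and v: "0 < v" and r: "0 < r" and th: "0 < th" "th < 1"
    and cond: "th \<ge> 1/3 \<or> (th < 1/3 \<and> r^2 \<le> 9 / (4 * (1 - 3 * th)))"
    and e1: "u * (1 + u^2 + v^2) = r * (1 + u^2 + th * v^2)"
    and e2: "v * (1 + u^2 + v^2) = r * (1 + v^2 + th * u^2)"
  shows "u = v"
proof (rule ccontr)
  assume ne: "u \<noteq> v"
  define p q where "p = u + v" and "q = u * v"
  have sq: "u^2 + v^2 = p^2 - 2 * q" unfolding p_def q_def by (simp add: power2_eq_square algebra_simps)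
  have "(u - v) * (1 + u^2 + v^2) = (u - v) * (r * (1 - th) * p)"
    using e1 e2 unfolding p_def by (simp add: algebra_simps power2_eq_square)
  then have diff: "1 + u^2 + v^2 = r * (1 - th) * p" using ne by simp
  have "r * ((1 - th) * p^2) = p * (1 + u^2 + v^2)"
    unfolding diff by (simp add: algebra_simps power2_eq_square)
  also have "\<dots> = r * (2 + (1 + th) * (u^2 + v^2))"
    using e1 e2 unfolding p_def by (simp add: algebra_simps)
  finally have "(1 - th) * p^2 = 2 + (1 + th) * (u^2 + v^2)" using r by simp
  then have eq1: "(1 + th) * q - th * p^2 = 1" unfolding sq by (simp add: algebra_simps)
  have eq2: "1 + p^2 - 2 * q = r * (1 - th) * p" using diff sq by simp
  have "0 < (u - v)^2" using ne by simp
  then have disc: "4 * q < p^2"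
    unfolding p_def q_def by (simp add: power2_eq_square algebra_simps)
  have p: "0 < p" using u v p_def by simp
  note bounds = asymmetric_sum_product_bounds[OF p th disc eq1 eq2]
  show False
  proof (cases "th \<ge> 1/3")
    case True
    then show False using bounds(1) mult_right_mono[of "1 - 3 * th" 0 "p^2"] by simp
  next
    case False
    then have "4 * (1 - 3 * th) * r^2 \<le> 9" using cond by (simp add: field_simps)
    then show False using bounds(2) by simp
  qed
qed

lemma F_pair_fixed_point_symmetric:
  fixes a b lam th :: real
  assumes a: "0 < a" and b: "0 < b" and lam: "0 < lam" and th: "0 < th" "th < 1"
    and cond: "th \<ge> 1/3 \<or> (th < 1/3 \<and> lam \<le> 9 / (4 * (1 - 3 * th)))"
    and ea: "a = lam * (F a b th)^2" and eb: "b = lam * (F b a th)^2"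
  shows "a = b"
proof -
  define u v r where "u = sqrt a" and "v = sqrt b" and "r = sqrt lam"
  have u: "0 < u" "u^2 = a" and v: "0 < v" "v^2 = b" and r: "0 < r" "r^2 = lam"
    using a b lam unfolding u_def v_def r_def by auto
  have Fpos: "0 < F x y th" if "0 < x" "0 < y" for x y
    unfolding F_def using that th by (intro divide_pos_pos add_pos_pos) auto
  have "u = r * F a b th"
    using arg_cong[OF ea, of sqrt] Fpos[OF a b] unfolding u_def r_def by (simp add: real_sqrt_mult)
  then have e1: "u * (1 + u^2 + v^2) = r * (1 + u^2 + th * v^2)"
    using a b u v unfolding F_def by (simp add: field_simps)
  have "v = r * F b a th"
    using arg_cong[OF eb, of sqrt] Fpos[OF b a] unfolding v_def r_def by (simp add: real_sqrt_mult)
  then have e2: "v * (1 + u^2 + v^2) = r * (1 + v^2 + th * u^2)"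
    using a b u v unfolding F_def by (simp add: field_simps add.commute)
  have "u = v" using sqrt_pair_system_symmetric[OF u(1) v(1) r(1) th _ e1 e2] cond r by simp
  then show ?thesis using u v by metis
qed

lemma F_diag_fixed_point_ex1:
  fixes lam th :: real
  assumes lam: "0 < lam" and th: "0 \<le> th" "th \<le> 1"
  shows "\<exists>!x. 0 < x \<and> x = lam * (F x x th)^2"
proof -
  define g where "g x = lam * (F x x th)^2" for x
  have "continuous_on {0..} g" unfolding g_def by (intro continuous_intros continuous_on_F_diag)
  moreover have "0 < g 0" using lam unfolding g_def F_diag by simp
  moreover have "g x \<le> lam" if "0 \<le> x" for x
  proof -
    have "(F x x th)^2 \<le> 1"
      using F_diag_pos[OF that th(1)] F_diag_le_one[OF that th(2)] by (intro power_le_one) auto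
    then show ?thesis unfolding g_def using lam by (simp add: mult_left_le)
  qed
  ultimately obtain xs where xs: "0 < xs" "xs = g xs" by (metis fixed_point_exists_bounded)
  have g_antimono: "g y \<le> g x" if "0 \<le> x" "x \<le> y" for x y
    unfolding g_def using that lam th F_diag_antimono F_diag_pos[THEN less_imp_le]
    by (auto intro!: mult_left_mono power_mono)
  have "x = xs" if "0 < x" "x = g x" for x
    using fixed_point_unique_antimono[OF g_antimono] that xs by simp
  then show ?thesis using xs unfolding g_def by blast
qed

theorem mainTheorem15:
  fixes lam th :: real
  assumes "lam > 0" and "0 < th" and "th < 1"
    and "th \<ge> 1/3 \<or> (th < 1/3 \<and> lam \<le> 9 / (4 * (1 - 3 * th)))"
  shows "\<exists>xs::real. xs > 0 \<and> xs = lam * ((1 + (1 + th) * xs) / (1 + 2 * xs))^2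
     \<and> (\<forall>x>0. x = lam * ((1 + (1 + th) * x) / (1 + 2 * x))^2 \<longrightarrow> x = xs)
     \<and> {(zm1, zp1, zm2, zp2).
          (zm1::real) > 0 \<and> zp1 > 0 \<and> zm2 > 0 \<and> zp2 > 0 \<and>
          zm1 = lam * (F zm1 zp2 th)^2 \<and> zp1 = lam * (F zp1 zm2 th)^2 \<and>
          zm2 = lam * (F zm2 zp1 th)^2 \<and> zp2 = lam * (F zp2 zm1 th)^2}
       = {(xs, xs, xs, xs)}"
  (is "\<exists>xs. _ \<and> _ \<and> _ \<and> ?S = _")
proof -
  obtain xs where xs: "0 < xs" "xs = lam * (F xs xs th)^2"
    and uniq: "\<And>x. 0 < x \<Longrightarrow> x = lam * (F x x th)^2 \<Longrightarrow> x = xs"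
    using F_diag_fixed_point_ex1[of lam th] assms by (metis less_imp_le)
  have "?S \<subseteq> {(xs, xs, xs, xs)}"
  proof
    fix z assume "z \<in> ?S"
    then obtain a b c d where z: "z = (a, b, c, d)"
      and pos: "0 < a" "0 < b" "0 < c" "0 < d"
      and eqs: "a = lam * (F a d th)^2" "b = lam * (F b c th)^2"
        "c = lam * (F c b th)^2" "d = lam * (F d a th)^2"
      by blast
    have "d = a" "c = b"
      using F_pair_fixed_point_symmetric[OF pos(1,4) assms eqs(1,4)]
        F_pair_fixed_point_symmetric[OF pos(2,3) assms eqs(2,3)] by simp_all
    with pos eqs have "a = xs" "b = xs" by (metis uniq)+
    with z \<open>d = a\<close> \<open>c = b\<close> show "z \<in> {(xs, xs, xs, xs)}" by simp
  qed
  moreover have "{(xs, xs, xs, xs)} \<subseteq> ?S" using xs by simp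
  ultimately show ?thesis
    unfolding F_diag[symmetric] using xs uniq by blast
qed

end
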